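(* Let $V$ be a vertex operator algebra and $W_1,W_2,W_3$ discretely $\mathbb{R}$-graded $V$-modules such that $W_1$, $W_2$ and the contragredient module $W_3'$ are $C_1$-cofinite. Then the space of intertwining operators of type $\binom{W_3}{W_1W_2}$ is finite-dimensional (i.e. the fusion rule $N^{W_3}_{W_1W_2}$ is finite).
   Context: $V_+=\coprod_{n>0}V_{(n)}$; for a $V$-module $W$, $C_1(W)$ is the span of all $u_{-1}w$ with $u\in V_+$, $w\in W$, and $W$ is $C_1$-cofinite if $\dim W/C_1(W)<\infty$. A discretely $\mathbb{R}$-graded $V$-module is a $V$-module graded by $L(0)$-eigenvalues in $\mathbb{R}$ such that for each $r$ the sum of homogeneous subspaces of weight $\le r$ is finite-dimensional. Intertwining operators are in the sense of Frenkel–Huang–Lepowsky. *)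

theory Defs
  imports Complex_Main
begin

text \<open>A vertex operator \<open>Y(u,x) = \<Sum>n u_n x^{-n-1}\<close> is recorded by its modes:
  \<open>Y u n v = u_n v\<close>.\<close>

record 'v voa =
  vscale :: "complex \<Rightarrow> 'v \<Rightarrow> 'v"
  vY     :: "'v \<Rightarrow> int \<Rightarrow> 'v \<Rightarrow> 'v"
  vac    :: 'v
  omega  :: 'v

record ('v, 'w) vmod =
  mscale :: "complex \<Rightarrow> 'w \<Rightarrow> 'w"
  mY     :: "'v \<Rightarrow> int \<Rightarrow> 'w \<Rightarrow> 'w"

definition is_linear :: "(complex \<Rightarrow> 'a \<Rightarrow> 'a) \<Rightarrow> (complex \<Rightarrow> 'b \<Rightarrow> 'b) \<Rightarrow> ('a::ab_group_add \<Rightarrow> 'b::ab_group_add) \<Rightarrow> bool" where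
  "is_linear s t f \<longleftrightarrow> (\<forall>x y. f (x + y) = f x + f y) \<and> (\<forall>c x. f (s c x) = t c (f x))"

definition Vn :: "('v::ab_group_add) voa \<Rightarrow> int \<Rightarrow> 'v set" where
  "Vn V n = {v. vY V (omega V) 1 v = vscale V (of_int n) v}"

definition L1pow :: "('v::ab_group_add) voa \<Rightarrow> nat \<Rightarrow> 'v \<Rightarrow> 'v" where
  "L1pow V j = (vY V (omega V) 2) ^^ j"

definition is_voa :: "('v::ab_group_add) voa \<Rightarrow> bool" where
  "is_voa V \<longleftrightarrow>
     vector_space (vscale V)
   \<and> (\<forall>u n. is_linear (vscale V) (vscale V) (vY V u n))
   \<and> (\<forall>v n. is_linear (vscale V) (vscale V) (\<lambda>u. vY V u n v))
   \<comment> \<open>truncation\<close>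
   \<and> (\<forall>u v. \<exists>N. \<forall>n\<ge>N. vY V u n v = 0)
   \<comment> \<open>grading by \<open>L(0)\<close>-eigenvalues in \<open>\<int>\<close>\<close>
   \<and> (\<forall>v. \<exists>S comp. finite S \<and> (\<forall>n\<in>S. comp n \<in> Vn V n) \<and> v = (\<Sum>n\<in>S. comp n))
   \<and> (\<forall>n. \<exists>B. finite B \<and> Vn V n \<subseteq> module.span (vscale V) B)
   \<and> (\<exists>N. \<forall>n<N. Vn V n = {0})
   \<and> omega V \<in> Vn V 2
   \<comment> \<open>vacuum and creation\<close>
   \<and> (\<forall>n v. vY V (vac V) n v = (if n = -1 then v else 0))
   \<and> (\<forall>v. vY V v (-1) (vac V) = v \<and> (\<forall>n\<ge>0. vY V v n (vac V) = 0))
   \<comment> \<open>Jacobi identity (Borcherds component form)\<close>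
   \<and> (\<forall>u v w p q r. \<exists>N. \<forall>M\<ge>N.
        (\<Sum>i=0..M. vscale V (of_int p gchoose i) (vY V (vY V u (r + int i) v) (p + q - int i) w))
      = (\<Sum>i=0..M. vscale V ((-1) ^ i * (of_int r gchoose i))
           (vY V u (p + r - int i) (vY V v (q + int i) w)
            - vscale V ((-1) powi r) (vY V v (q + r - int i) (vY V u (p + int i) w)))))
   \<comment> \<open>Virasoro relations, \<open>L(m) = \<omega>_{m+1}\<close>\<close>
   \<and> (\<exists>c::complex. \<forall>m n v.
        vY V (omega V) (m + 1) (vY V (omega V) (n + 1) v)
        - vY V (omega V) (n + 1) (vY V (omega V) (m + 1) v)
      = vscale V (of_int (m - n)) (vY V (omega V) (m + n + 1) v)
        + vscale V ((of_int (m ^ 3 - m) / 12) * (if m + n = 0 then 1 else 0) * c) v)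
   \<comment> \<open>\<open>L(-1)\<close>-derivative property: \<open>(L(-1)v)_n = -n v_{n-1}\<close>\<close>
   \<and> (\<forall>v n w. vY V (vY V (omega V) 0 v) n w = vscale V (- of_int n) (vY V v (n - 1) w))"

definition Wr :: "('v::ab_group_add) voa \<Rightarrow> ('v, 'w::ab_group_add) vmod \<Rightarrow> real \<Rightarrow> 'w set" where
  "Wr V W r = {w. mY W (omega V) 1 w = mscale W (of_real r) w}"

definition is_vmod :: "('v::ab_group_add) voa \<Rightarrow> ('v, 'w::ab_group_add) vmod \<Rightarrow> bool" where
  "is_vmod V W \<longleftrightarrow>
     vector_space (mscale W)
   \<and> (\<forall>u n. is_linear (mscale W) (mscale W) (mY W u n))
   \<and> (\<forall>w n. is_linear (vscale V) (mscale W) (\<lambda>u. mY W u n w))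
   \<and> (\<forall>u w. \<exists>N. \<forall>n\<ge>N. mY W u n w = 0)
   \<and> (\<forall>n w. mY W (vac V) n w = (if n = -1 then w else 0))
   \<and> (\<forall>u v w p q r. \<exists>N. \<forall>M\<ge>N.
        (\<Sum>i=0..M. mscale W (of_int p gchoose i) (mY W (vY V u (r + int i) v) (p + q - int i) w))
      = (\<Sum>i=0..M. mscale W ((-1) ^ i * (of_int r gchoose i))
           (mY W u (p + r - int i) (mY W v (q + int i) w)
            - mscale W ((-1) powi r) (mY W v (q + r - int i) (mY W u (p + int i) w)))))
   \<and> (\<forall>v n w. mY W (vY V (omega V) 0 v) n w = mscale W (- of_int n) (mY W v (n - 1) w))"

text \<open>Discretely \<open>\<real>\<close>-graded module: graded by real \<open>L(0)\<close>-eigenvalues, and for each \<open>r\<close>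
  the sum of the homogeneous subspaces of weight \<open>\<le> r\<close> is finite-dimensional.\<close>
definition is_drg_mod :: "('v::ab_group_add) voa \<Rightarrow> ('v, 'w::ab_group_add) vmod \<Rightarrow> bool" where
  "is_drg_mod V W \<longleftrightarrow> is_vmod V W
   \<and> (\<forall>w. \<exists>S comp. finite S \<and> (\<forall>r\<in>S. comp r \<in> Wr V W r) \<and> w = (\<Sum>r\<in>S. comp r))
   \<and> (\<forall>r. \<exists>B. finite B \<and>
          module.span (mscale W) (\<Union>s\<in>{..r}. Wr V W s) \<subseteq> module.span (mscale W) B)"

definition Vplus :: "('v::ab_group_add) voa \<Rightarrow> 'v set" where
  "Vplus V = module.span (vscale V) (\<Union>n\<in>{0<..}. Vn V n)"

definition C1 :: "('v::ab_group_add) voa \<Rightarrow> ('v, 'w::ab_group_add) vmod \<Rightarrow> 'w set" where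
  "C1 V W = module.span (mscale W) {mY W u (-1) w | u w. u \<in> Vplus V}"

definition C1_cofinite :: "('v::ab_group_add) voa \<Rightarrow> ('v, 'w::ab_group_add) vmod \<Rightarrow> bool" where
  "C1_cofinite V W \<longleftrightarrow> (\<exists>F. finite F \<and> module.span (mscale W) (F \<union> C1 V W) = UNIV)"

text \<open>Elements of \<open>W'\<close> are linear functionals on \<open>W\<close> vanishing on all but finitely many
  homogeneous subspaces \<open>W_[r]\<close>.\<close>
definition contra :: "('v::ab_group_add) voa \<Rightarrow> ('v, 'w::ab_group_add) vmod \<Rightarrow> ('w \<Rightarrow> complex) set" where
  "contra V W = {f. (\<forall>x y. f (x + y) = f x + f y) \<and> (\<forall>c x. f (mscale W c x) = c * f x)
                  \<and> (\<exists>R. finite R \<and> (\<forall>r. r \<notin> R \<longrightarrow> (\<forall>w\<in>Wr V W r. f w = 0)))}"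

text \<open>Modes of the contragredient vertex operator
  \<open>\<langle>Y'(v,x)w',w\<rangle> = \<langle>w', Y(e^{xL(1)}(-x^{-2})^{L(0)} v, x^{-1}) w\<rangle>\<close> for \<open>v \<in> V_(k)\<close>:
  \<open>\<langle>v'_n w', w\<rangle> = (-1)^k \<Sum>_{j\<ge>0} (1/j!) \<langle>w', (L(1)^j v)_{2k-j-n-2} w\<rangle>\<close>
  (a finite sum, since \<open>L(1)^j v \<in> V_(k-j)\<close> vanishes for large \<open>j\<close>).\<close>
definition contra_mode :: "('v::ab_group_add) voa \<Rightarrow> ('v, 'w::ab_group_add) vmod \<Rightarrow> int \<Rightarrow> 'v \<Rightarrow> int
    \<Rightarrow> ('w \<Rightarrow> complex) \<Rightarrow> ('w \<Rightarrow> complex)" where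
  "contra_mode V W k v n f = (\<lambda>w. (-1) powi k *
      (\<Sum>j. (1 / fact j) * f (mY W (L1pow V j v) (2 * k - int j - n - 2) w)))"

definition fun_span :: "('w \<Rightarrow> complex) set \<Rightarrow> ('w \<Rightarrow> complex) set" where
  "fun_span S = {(\<lambda>w. \<Sum>i<m. c i * g i w) | (m::nat) c g. \<forall>i<m. g i \<in> S}"

text \<open>\<open>C_1(W')\<close>: span of \<open>u_{-1} w'\<close> for \<open>u \<in> V_+\<close>; by linearity in \<open>u\<close> it suffices to take
  homogeneous \<open>u\<close> of positive weight.\<close>
definition C1_contra :: "('v::ab_group_add) voa \<Rightarrow> ('v, 'w::ab_group_add) vmod \<Rightarrow> ('w \<Rightarrow> complex) set" where
  "C1_contra V W = fun_span {contra_mode V W k u (-1) f | k u f. k > 0 \<and> u \<in> Vn V k \<and> f \<in> contra V W}"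

definition contra_C1_cofinite :: "('v::ab_group_add) voa \<Rightarrow> ('v, 'w::ab_group_add) vmod \<Rightarrow> bool" where
  "contra_C1_cofinite V W \<longleftrightarrow>
     (\<exists>F. finite F \<and> F \<subseteq> contra V W \<and> contra V W \<subseteq> fun_span (F \<union> C1_contra V W))"

text \<open>\<open>\<Y>(w_1,x)w_2 = \<Sum>_{n\<in>\<complex>} (w_1)_n w_2 x^{-n-1}\<close>, recorded as \<open>I w1 n w2 = (w_1)_n w_2\<close>.\<close>
definition is_intertwining ::
  "('v::ab_group_add) voa \<Rightarrow> ('v, 'w1::ab_group_add) vmod \<Rightarrow> ('v, 'w2::ab_group_add) vmod
   \<Rightarrow> ('v, 'w3::ab_group_add) vmod \<Rightarrow> ('w1 \<Rightarrow> complex \<Rightarrow> 'w2 \<Rightarrow> 'w3) \<Rightarrow> bool" where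
  "is_intertwining V W1 W2 W3 I \<longleftrightarrow>
     (\<forall>w1 n. is_linear (mscale W2) (mscale W3) (I w1 n))
   \<and> (\<forall>w2 n. is_linear (mscale W1) (mscale W3) (\<lambda>w1. I w1 n w2))
   \<comment> \<open>lower truncation\<close>
   \<and> (\<forall>w1 w2 n. \<exists>N. \<forall>m\<ge>N. I w1 (n + of_nat m) w2 = 0)
   \<comment> \<open>\<open>L(-1)\<close>-derivative property\<close>
   \<and> (\<forall>w1 n w2. I (mY W1 (omega V) 0 w1) n w2 = mscale W3 (- n) (I w1 (n - 1) w2))
   \<comment> \<open>Jacobi identity (component form)\<close>
   \<and> (\<forall>v w1 w2 (p::int) (q::int) (a::complex). \<exists>N. \<forall>M\<ge>N.
        (\<Sum>i=0..M. mscale W3 (of_int p gchoose i)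
            (I (mY W1 v (q + int i) w1) (of_int p + a - of_nat i) w2))
      = (\<Sum>i=0..M. mscale W3 ((-1) ^ i * (of_int q gchoose i))
           (mY W3 v (p + q - int i) (I w1 (a + of_nat i) w2)
            - mscale W3 ((-1) powi q) (I w1 (of_int q + a - of_nat i) (mY W2 v (p + int i) w2)))))"

definition intertwining_space_fin_dim ::
  "('v::ab_group_add) voa \<Rightarrow> ('v, 'w1::ab_group_add) vmod \<Rightarrow> ('v, 'w2::ab_group_add) vmod
   \<Rightarrow> ('v, 'w3::ab_group_add) vmod \<Rightarrow> bool" where
  "intertwining_space_fin_dim V W1 W2 W3 \<longleftrightarrow>
     (\<exists>F. finite F \<and> F \<subseteq> {I. is_intertwining V W1 W2 W3 I} \<and>
        (\<forall>I. is_intertwining V W1 W2 W3 I \<longrightarrow>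
           (\<exists>c. I = (\<lambda>w1 n w2. \<Sum>J\<in>F. mscale W3 (c J) (J w1 n w2)))))"

end

theory Submission
  imports Defs "HOL-Library.Function_Algebras"
begin

text \<open>An intertwining operator is determined by finitely many matrix coefficients
  \<open>\<langle>f, (h\<^sub>1)\<^sub>a h\<^sub>2\<rangle>\<close>: here \<open>h\<^sub>1\<close>, \<open>h\<^sub>2\<close> run through homogeneous vectors spanning \<open>W\<^sub>1\<close>, \<open>W\<^sub>2\<close>
  modulo \<open>C\<^sub>1\<close>, \<open>f\<close> through functionals spanning \<open>W\<^sub>3'\<close> modulo \<open>C\<^sub>1(W\<^sub>3')\<close>, and \<open>a\<close> through
  the finitely many modes for which the weight of \<open>(h\<^sub>1)\<^sub>a h\<^sub>2\<close> lies in the support of \<open>f\<close>.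
  If these coefficients vanish, then all coefficients \<open>\<langle>g, (w\<^sub>1)\<^sub>a w\<^sub>2\<rangle>\<close> vanish, by induction on
  the total weight of \<open>w\<^sub>1\<close>, \<open>w\<^sub>2\<close> and \<open>(w\<^sub>1)\<^sub>a w\<^sub>2\<close>, which is bounded below: when \<open>w\<^sub>1\<close>, \<open>w\<^sub>2\<close> or \<open>g\<close>
  is of the form \<open>u\<^sub>-\<^sub>1 x\<close> with \<open>u \<in> V\<^sub>+\<close>, the associator formula, the commutator formula
  or the definition of the contragredient vertex operator rewrites the coefficient as a finite
  combination of coefficients of strictly smaller total weight. Since homogeneous vectors are
  separated by \<open>W\<^sub>3'\<close>, the space of intertwining operators embeds linearly into \<open>\<complex>\<^sup>K\<close> for a
  finite set \<open>K\<close>.\<close>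

section \<open>Linear algebra of eigenvectors\<close>

lemma vector_space_field_mult: "vector_space ((*) :: 'a::field \<Rightarrow> 'a \<Rightarrow> 'a)"
  by unfold_locales (simp_all add: algebra_simps)

context vector_space
begin

lemma eigenvectors_sum_eq_0_imp_eq_0:
  assumes L_add: "\<And>x y. L (x + y) = L x + L y" and L_scale: "\<And>c x. L (c *s x) = c *s L x"
    and "finite S" "\<forall>s\<in>S. L (y s) = ev s *s y s" "inj_on ev S" "sum y S = 0"
  shows "\<forall>s\<in>S. y s = 0"
  using assms(3-)
proof (induction S arbitrary: y rule: finite_induct)
  case empty
  then show ?case by simp
next
  case (insert a S)
  have L_additive: "additive L" using L_add by (simp add: additive_def)
  have sum_0: "y a + sum y S = 0" using insert by simp
  then have "L (y a + sum y S) = 0" using additive.zero[OF L_additive] by simp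
  moreover have "L (sum y S) = (\<Sum>s\<in>S. ev s *s y s)"
    unfolding additive.sum[OF L_additive] using insert.prems(1) by (auto intro: sum.cong)
  ultimately have L_sum_0: "ev a *s y a + (\<Sum>s\<in>S. ev s *s y s) = 0"
    using insert.prems(1) L_add by simp
  \<comment> \<open>subtracting \<open>ev a\<close> times the relation kills the \<open>a\<close>-component\<close>
  have "(\<Sum>s\<in>S. (ev s - ev a) *s y s) = (\<Sum>s\<in>S. ev s *s y s) - ev a *s sum y S"
    by (simp add: scale_left_diff_distrib sum_subtractf scale_sum_right)
  also have "\<dots> = 0"
    using L_sum_0 sum_0 by (simp add: eq_neg_iff_add_eq_0[symmetric] algebra_simps)
  finally have "\<forall>s\<in>S. (ev s - ev a) *s y s = 0"
    using insert.prems by (intro insert.IH) (auto simp: L_scale mult.commute inj_on_insert)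
  moreover have "\<forall>s\<in>S. ev s \<noteq> ev a"
    using insert.prems(2) insert.hyps(2) by (auto simp: inj_on_def)
  ultimately have "\<forall>s\<in>S. y s = 0" by simp
  with sum_0 show ?case by simp
qed

lemma eigenvector_in_span_eigenvectors_same_eigenvalue:
  assumes L_add: "\<And>x y. L (x + y) = L x + L y" and L_scale: "\<And>c x. L (c *s x) = c *s L x"
    and "inj ev" and T: "\<forall>t\<in>T. \<exists>r. L t = ev r *s t"
    and w: "w \<in> span T" "L w = ev r *s w"
  shows "w \<in> span {t\<in>T. L t = ev r *s t}"
proof -
  have L_additive: "additive L" using L_add by (simp add: additive_def)
  obtain S u where S: "finite S" "S \<subseteq> T" and w_sum: "w = (\<Sum>t\<in>S. u t *s t)"
    using w(1) unfolding span_explicit by blast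
  obtain wt where wt: "\<And>t. t \<in> T \<Longrightarrow> L t = ev (wt t) *s t"
    using T by metis
  define G where "G \<rho> = (\<Sum>t\<in>{t\<in>S. wt t = \<rho>}. u t *s t)" for \<rho>
  have L_G: "L (G \<rho>) = ev \<rho> *s G \<rho>" for \<rho>
    unfolding G_def additive.sum[OF L_additive] scale_sum_right
    using S(2) by (intro sum.cong) (auto simp: L_scale wt scale_left_commute)
  define P where "P = insert r (wt ` S)"
  have "(\<Sum>t\<in>S. u t *s t) = (\<Sum>\<rho>\<in>wt ` S. G \<rho>)"
    unfolding G_def using sum.image_gen[OF S(1)] by blast
  also have "\<dots> = sum G P"
    unfolding P_def G_def using S(1) by (intro sum.mono_neutral_left) (auto intro!: sum.neutral)
  finally have "(\<Sum>\<rho>\<in>P. G \<rho> - (if \<rho> = r then w else 0)) = 0"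
    using S(1) w_sum by (simp add: sum_subtractf P_def)
  \<comment> \<open>the components \<open>G \<rho>\<close> of \<open>w\<close> are eigenvectors for distinct eigenvalues\<close>
  then have "\<forall>\<rho>\<in>P. G \<rho> - (if \<rho> = r then w else 0) = 0"
    using S(1) \<open>inj ev\<close> L_G w(2) additive.diff[OF L_additive] additive.zero[OF L_additive]
    by (intro eigenvectors_sum_eq_0_imp_eq_0[OF L_add L_scale, of _ _ ev])
      (auto simp: P_def scale_right_diff_distrib inj_on_def inj_def)
  then have "w = G r" by (simp add: P_def)
  also have "\<dots> \<in> span {t\<in>T. L t = ev r *s t}"
    unfolding G_def using S(2) wt by (intro span_sum span_scale span_base) auto
  finally show ?thesis .
qed

lemma eigenvectors_independent:
  assumes L_add: "\<And>x y. L (x + y) = L x + L y" and L_scale: "\<And>c x. L (c *s x) = c *s L x"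
    and "inj ev" and inj_v: "inj_on v Q" and v: "\<And>r. r \<in> Q \<Longrightarrow> v r \<noteq> 0 \<and> L (v r) = ev r *s v r"
  shows "independent (v ` Q)"
proof
  assume "dependent (v ` Q)"
  then obtain t u where t: "finite t" "t \<subseteq> v ` Q" "(\<Sum>x\<in>t. u x *s x) = 0"
    and nonzero: "\<exists>x\<in>t. u x \<noteq> 0"
    unfolding dependent_explicit by blast
  define ev' where "ev' = ev \<circ> the_inv_into Q v"
  have ev': "L x = ev' x *s x" if "x \<in> t" for x
    using that t(2) v inj_v by (auto simp: ev'_def the_inv_into_f_f)
  have "\<forall>x\<in>t. u x *s x = 0"
  proof (rule eigenvectors_sum_eq_0_imp_eq_0[OF L_add L_scale t(1) _ _ t(3)])
    show "\<forall>x\<in>t. L (u x *s x) = ev' x *s u x *s x"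
      using ev' by (simp add: L_scale scale_left_commute)
    have "inj_on (the_inv_into Q v) t"
      using inj_on_the_inv_into[OF inj_v] t(2) by (rule inj_on_subset)
    moreover have "inj_on ev (the_inv_into Q v ` t)"
      using \<open>inj ev\<close> subset_UNIV by (rule inj_on_subset)
    ultimately show "inj_on ev' t"
      unfolding ev'_def by (rule comp_inj_on)
  qed
  moreover have "\<forall>x\<in>t. x \<noteq> 0" using t(2) v by auto
  ultimately show False using nonzero by auto
qed

lemma eigenvalues_bounded_below:
  assumes L_add: "\<And>x y. L (x + y) = L x + L y" and L_scale: "\<And>c x. L (c *s x) = c *s L x"
    and "inj ev" and "finite B"
    and B: "span (\<Union>s\<in>{..(r0::real)}. {w. L w = ev s *s w}) \<subseteq> span B"
  shows "\<exists>b. \<forall>r<b. \<forall>w. L w = ev r *s w \<longrightarrow> w = 0"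
proof -
  define Q where "Q = {r. r \<le> r0 \<and> (\<exists>w. w \<noteq> 0 \<and> L w = ev r *s w)}"
  have "\<forall>r\<in>Q. \<exists>w. w \<noteq> 0 \<and> L w = ev r *s w" by (simp add: Q_def)
  then obtain v where v: "\<And>r. r \<in> Q \<Longrightarrow> v r \<noteq> 0 \<and> L (v r) = ev r *s v r"
    by (metis bchoice)
  have inj_v: "inj_on v Q"
  proof (rule inj_onI)
    fix r r' assume "r \<in> Q" "r' \<in> Q" "v r = v r'"
    then have "ev r *s v r = ev r' *s v r" "v r \<noteq> 0" using v[of r] v[of r'] by auto
    then have "ev r = ev r'" by simp
    then show "r = r'" using \<open>inj ev\<close> by (simp add: inj_def)
  qed
  have "v ` Q \<subseteq> span B"
  proof
    fix x assume "x \<in> v ` Q"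
    then obtain r where "r \<in> Q" "x = v r" by blast
    then have "x \<in> (\<Union>s\<in>{..r0}. {w. L w = ev s *s w})" using v by (auto simp: Q_def)
    then have "x \<in> span (\<Union>s\<in>{..r0}. {w. L w = ev s *s w})" by (rule span_base)
    then show "x \<in> span B" using B by blast
  qed
  then have "finite (v ` Q)"
    using independent_span_bound[OF \<open>finite B\<close> eigenvectors_independent[OF L_add L_scale \<open>inj ev\<close> inj_v v]]
    by blast
  then have "finite Q" using finite_image_iff[OF inj_v] by simp
  have "w = 0" if "r < Min (insert r0 Q)" "L w = ev r *s w" for r w
  proof (rule ccontr)
    assume "w \<noteq> 0"
    moreover have "r \<le> r0" using that(1) \<open>finite Q\<close> by simp
    ultimately have "r \<in> Q" using that(2) by (auto simp: Q_def)
    then show False using that(1) \<open>finite Q\<close> by auto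
  qed
  then show ?thesis by blast
qed

lemma exists_linear_functional_separating:
  assumes "c \<notin> span U"
  obtains \<phi> where "Vector_Spaces.linear scale (*) \<phi>" "\<phi> c = 1" "\<And>x. x \<in> U \<Longrightarrow> \<phi> x = 0"
proof -
  interpret P: vector_space_pair scale "(*)"
    by (simp add: vector_space_pair_def vector_space_axioms vector_space_field_mult)
  obtain B where B: "B \<subseteq> span U" "independent B" "span U \<subseteq> span B"
    using maximal_independent_subset[of "span U"] by blast
  have "c \<notin> span B" using assms B(1) span_minimal[OF B(1)] by auto
  then have indep: "independent (insert c B)" using independent_insertI B(2) by blast
  define \<phi> where "\<phi> = P.construct (insert c B) (\<lambda>b. if b = c then 1 else 0)"
  have lin: "Vector_Spaces.linear scale (*) \<phi>"
    unfolding \<phi>_def by (rule P.linear_construct[OF indep])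
  have \<phi>_basis: "\<phi> b = (if b = c then 1 else 0)" if "b \<in> insert c B" for b
    unfolding \<phi>_def using P.construct_basis[OF indep that] .
  show ?thesis
  proof (rule that[OF lin])
    show "\<phi> c = 1" using \<phi>_basis by simp
    fix x assume "x \<in> U"
    then have "x \<in> span B" using B(3) span_base by blast
    moreover have "\<phi> b = 0" if "b \<in> B" for b using \<phi>_basis[of b] that \<open>c \<notin> span B\<close> span_base by auto
    ultimately show "\<phi> x = 0" using P.linear_eq_0_on_span[OF lin] by blast
  qed
qed

lemma subspace_subset_span_insert_if_kernel_spanned:
  assumes "subspace U" "x0 \<in> U" "\<phi> x0 \<noteq> 0"
    and \<phi>_add: "\<And>x y. \<phi> (x + y) = \<phi> x + \<phi> y" and \<phi>_scale: "\<And>c x. \<phi> (c *s x) = c * \<phi> x"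
    and kernel: "{x\<in>U. \<phi> x = 0} \<subseteq> span B"
  shows "U \<subseteq> span (insert x0 B)"
proof
  fix x assume "x \<in> U"
  have \<phi>_diff: "\<phi> (x - y) = \<phi> x - \<phi> y" for x y
    using additive.diff[of \<phi>] \<phi>_add by (simp add: additive_def)
  have "x - (\<phi> x / \<phi> x0) *s x0 \<in> {x\<in>U. \<phi> x = 0}"
    using assms(1-3) \<open>x \<in> U\<close> \<phi>_diff \<phi>_scale by (auto simp: subspace_diff subspace_scale)
  then have "x - (\<phi> x / \<phi> x0) *s x0 \<in> span (insert x0 B)"
    using kernel span_mono[of B "insert x0 B"] by blast
  then show "x \<in> span (insert x0 B)" using span_add span_scale span_base[of x0 "insert x0 B"]
    by (metis diff_add_cancel insertI1)
qed

lemma subspace_finitely_spanned_if_finitely_many_functionals_separate: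
  assumes "finite K" "subspace U"
    and "\<And>k x y. k \<in> K \<Longrightarrow> \<phi> k (x + y) = \<phi> k x + \<phi> k y"
    and "\<And>k c x. k \<in> K \<Longrightarrow> \<phi> k (c *s x) = c * \<phi> k x"
    and "\<And>x. x \<in> U \<Longrightarrow> (\<And>k. k \<in> K \<Longrightarrow> \<phi> k x = 0) \<Longrightarrow> x = 0"
  shows "\<exists>B. finite B \<and> B \<subseteq> U \<and> U \<subseteq> span B"
  using assms
proof (induction K arbitrary: U rule: finite_induct)
  case empty
  then show ?case by (auto intro!: exI[of _ "{}"])
next
  case (insert k K)
  note U = insert.prems(1) and separate = insert.prems(4)
  have \<phi>_add: "\<phi> k (x + y) = \<phi> k x + \<phi> k y" for x y
    using insert.prems(2) by simp
  have \<phi>_scale: "\<phi> k (c *s x) = c * \<phi> k x" for c x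
    using insert.prems(3) by simp
  define U' where "U' = {x\<in>U. \<phi> k x = 0}"
  have "\<exists>B'. finite B' \<and> B' \<subseteq> U' \<and> U' \<subseteq> span B'"
  proof (rule insert.IH)
    show "subspace U'"
      using U \<phi>_add \<phi>_scale \<phi>_scale[of 0] by (auto simp: U'_def subspace_def)
    show "\<phi> k' (x + y) = \<phi> k' x + \<phi> k' y" if "k' \<in> K" for k' x y
      using that by (intro insert.prems(2)) simp
    show "\<phi> k' (c *s x) = c * \<phi> k' x" if "k' \<in> K" for k' c x
      using that by (intro insert.prems(3)) simp
    show "x = 0" if "x \<in> U'" "\<And>k'. k' \<in> K \<Longrightarrow> \<phi> k' x = 0" for x
    proof (rule separate)
      show "x \<in> U" using that(1) by (simp add: U'_def)
      fix k' assume "k' \<in> insert k K"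
      then show "\<phi> k' x = 0" using that by (auto simp: U'_def)
    qed
  qed
  then obtain B' where B': "finite B'" "B' \<subseteq> U'" "U' \<subseteq> span B'" by blast
  show ?case
  proof (cases "U' = U")
    case True
    with B' show ?thesis by blast
  next
    case False
    then obtain x0 where x0: "x0 \<in> U" "\<phi> k x0 \<noteq> 0" by (auto simp: U'_def)
    then have "U \<subseteq> span (insert x0 B')"
      using U \<phi>_add \<phi>_scale B'(3)
      by (intro subspace_subset_span_insert_if_kernel_spanned[of _ _ "\<phi> k"]) (auto simp: U'_def)
    then show ?thesis using B' x0 by (auto simp: U'_def intro!: exI[of _ "insert x0 B'"])
  qed
qed

end

section \<open>Vertex operator algebras and their discretely graded modules\<close>

lemma is_linear_add: "is_linear s t f \<Longrightarrow> f (x + y) = f x + f y"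
  unfolding is_linear_def by blast

lemma is_linear_scale: "is_linear s t f \<Longrightarrow> f (s c x) = t c (f x)"
  unfolding is_linear_def by blast

lemma is_linear_additive: "is_linear s t f \<Longrightarrow> additive f"
  unfolding is_linear_def additive_def by blast

lemma is_linear_zero: "is_linear s t f \<Longrightarrow> f 0 = 0"
  using is_linear_additive additive.zero by blast

lemma is_linear_sum: "is_linear s t f \<Longrightarrow> f (sum g A) = (\<Sum>x\<in>A. f (g x))"
  using is_linear_additive additive.sum by blast

lemma gbinomial_1_left: "(1::'a::field_char_0) gchoose i = (if i \<le> 1 then 1 else 0)"
  using binomial_gbinomial[of 1 i, where 'a = 'a] by (cases i) (auto simp: binomial_eq_0)

lemma sum_atLeast0_atMost_eq_first:
  "(\<And>i. 1 \<le> i \<Longrightarrow> f i = 0) \<Longrightarrow> (\<Sum>i=0..(M::nat). f i) = f 0"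
  by (subst sum.mono_neutral_right[of "{0..M}" "{0}"]) auto

lemma sum_atLeast0_atMost_eq_first_two:
  "1 \<le> M \<Longrightarrow> (\<And>i. 2 \<le> i \<Longrightarrow> f i = 0) \<Longrightarrow> (\<Sum>i=0..(M::nat). f i) = f 0 + f 1"
  by (subst sum.mono_neutral_right[of "{0..M}" "{0, 1}"]) auto

locale vertex_operator_algebra =
  fixes V :: "('v::ab_group_add) voa"
  assumes voa: "is_voa V"
begin

sublocale V: vector_space "vscale V"
  using voa by (simp add: is_voa_def)

lemma vY_linear: "is_linear (vscale V) (vscale V) (vY V u n)"
  using voa by (simp add: is_voa_def)

lemma L1_lowers_weight: "v \<in> Vn V k \<Longrightarrow> vY V (omega V) 2 v \<in> Vn V (k - 1)"
proof -
  assume v: "v \<in> Vn V k"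
  have "\<exists>c. \<forall>m n v.
        vY V (omega V) (m + 1) (vY V (omega V) (n + 1) v)
        - vY V (omega V) (n + 1) (vY V (omega V) (m + 1) v)
      = vscale V (of_int (m - n)) (vY V (omega V) (m + n + 1) v)
        + vscale V ((of_int (m ^ 3 - m) / 12) * (if m + n = 0 then 1 else 0) * c) v"
    using voa unfolding is_voa_def by blast
  then obtain c where vir: "\<forall>m n v.
        vY V (omega V) (m + 1) (vY V (omega V) (n + 1) v)
        - vY V (omega V) (n + 1) (vY V (omega V) (m + 1) v)
      = vscale V (of_int (m - n)) (vY V (omega V) (m + n + 1) v)
        + vscale V ((of_int (m ^ 3 - m) / 12) * (if m + n = 0 then 1 else 0) * c) v"
    by blast
  \<comment> \<open>\<open>[L(0), L(1)] = -L(1)\<close>\<close>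
  from vir[rule_format, of 0 1 v]
  have "vY V (omega V) 1 (vY V (omega V) 2 v) - vY V (omega V) 2 (vY V (omega V) 1 v)
      = vscale V (-1) (vY V (omega V) 2 v)" by simp
  moreover have "vY V (omega V) 2 (vY V (omega V) 1 v) = vscale V (of_int k) (vY V (omega V) 2 v)"
    using v is_linear_scale[OF vY_linear] by (simp add: Vn_def)
  ultimately have "vY V (omega V) 1 (vY V (omega V) 2 v)
      = vscale V (of_int k) (vY V (omega V) 2 v) + vscale V (-1) (vY V (omega V) 2 v)"
    by (simp add: algebra_simps)
  also have "\<dots> = vscale V (of_int (k - 1)) (vY V (omega V) 2 v)"
    by (simp add: V.scale_left_diff_distrib)
  finally show ?thesis by (simp add: Vn_def)
qed

lemma L1pow_Vn: "v \<in> Vn V k \<Longrightarrow> L1pow V j v \<in> Vn V (k - int j)"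
proof (induction j arbitrary: k)
  case 0
  then show ?case by (simp add: L1pow_def)
next
  case (Suc j)
  then have "vY V (omega V) 2 (L1pow V j v) \<in> Vn V (k - int j - 1)"
    by (intro L1_lowers_weight) simp
  then show ?case by (simp add: L1pow_def algebra_simps)
qed

end

lemma contra_add: "g \<in> contra V W \<Longrightarrow> g (x + y) = g x + g y"
  by (simp add: contra_def)

lemma contra_scale: "g \<in> contra V W \<Longrightarrow> g (mscale W c x) = c * g x"
  by (simp add: contra_def)

lemma contra_additive: "g \<in> contra V W \<Longrightarrow> additive g"
  by (simp add: contra_def additive_def)

lemma contra_zero: "g \<in> contra V W \<Longrightarrow> g 0 = 0"
  using contra_additive additive.zero by blast

lemma contra_diff: "g \<in> contra V W \<Longrightarrow> g (x - y) = g x - g y"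
  using contra_additive additive.diff by blast

lemma contra_sum: "g \<in> contra V W \<Longrightarrow> g (sum f A) = (\<Sum>x\<in>A. g (f x))"
  using contra_additive additive.sum by blast

lemma contra_finite_support:
  "g \<in> contra V W \<Longrightarrow> \<exists>R. finite R \<and> (\<forall>r. r \<notin> R \<longrightarrow> (\<forall>w\<in>Wr V W r. g w = 0))"
  by (simp add: contra_def)

lemma fun_span_eq_0: "g \<in> fun_span S \<Longrightarrow> (\<And>h. h \<in> S \<Longrightarrow> h w = 0) \<Longrightarrow> g w = (0::complex)"
  unfolding fun_span_def by (auto intro!: sum.neutral)

locale drg_module = vertex_operator_algebra V for V :: "('v::ab_group_add) voa" +
  fixes W :: "('v, 'w::ab_group_add) vmod"
  assumes drg: "is_drg_mod V W"
begin

lemma W_is_vmod: "is_vmod V W"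
  using drg by (simp add: is_drg_mod_def)

sublocale W: vector_space "mscale W"
  using W_is_vmod by (simp add: is_vmod_def)

lemma mY_linear: "is_linear (mscale W) (mscale W) (mY W u n)"
  using W_is_vmod by (simp add: is_vmod_def)

lemma mY_linear_vertex: "is_linear (vscale V) (mscale W) (\<lambda>u. mY W u n w)"
  using W_is_vmod by (simp add: is_vmod_def)

lemma mY_L_minus_1: "mY W (vY V (omega V) 0 v) n w = mscale W (- of_int n) (mY W v (n - 1) w)"
  using W_is_vmod unfolding is_vmod_def by blast

lemma homogeneous_decomposition:
  "\<exists>S comp. finite S \<and> (\<forall>r\<in>S. comp r \<in> Wr V W r) \<and> w = (\<Sum>r\<in>S. comp r)"
  using drg unfolding is_drg_mod_def by blast

lemma mY_commutator:
  "\<exists>N. \<forall>M\<ge>N. (\<Sum>i=0..M. mscale W (of_int p gchoose i) (mY W (vY V u (int i) v) (p + q - int i) w))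
      = mY W u p (mY W v q w) - mY W v q (mY W u p w)"
proof -
  obtain N where N: "\<forall>M\<ge>N.
        (\<Sum>i=0..M. mscale W (of_int p gchoose i) (mY W (vY V u (0 + int i) v) (p + q - int i) w))
      = (\<Sum>i=0..M. mscale W ((-1) ^ i * (of_int 0 gchoose i))
           (mY W u (p + 0 - int i) (mY W v (q + int i) w)
            - mscale W ((-1) powi 0) (mY W v (q + 0 - int i) (mY W u (p + int i) w))))"
    using W_is_vmod unfolding is_vmod_def by blast
  have rhs: "(\<Sum>i=0..M. mscale W ((-1) ^ i * (of_int 0 gchoose i))
           (mY W u (p + 0 - int i) (mY W v (q + int i) w)
            - mscale W ((-1) powi 0) (mY W v (q + 0 - int i) (mY W u (p + int i) w))))
      = mY W u p (mY W v q w) - mY W v q (mY W u p w)" for M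
    by (subst sum_atLeast0_atMost_eq_first) (auto simp: gbinomial_0_left)
  show ?thesis using N unfolding rhs by auto
qed

abbreviation L0 where "L0 \<equiv> mY W (omega V) 1"

lemma L0_add: "L0 (x + y) = L0 x + L0 y"
  using is_linear_add[OF mY_linear] .

lemma L0_scale: "L0 (mscale W c x) = mscale W c (L0 x)"
  using is_linear_scale[OF mY_linear] .

lemma Wr_eq_0_if_two_weights: "w \<in> Wr V W r \<Longrightarrow> w \<in> Wr V W s \<Longrightarrow> r \<noteq> s \<Longrightarrow> w = 0"
  unfolding Wr_def by auto

lemma weights_bounded_below: "\<exists>b. \<forall>r<b. \<forall>w\<in>Wr V W r. w = 0"
proof -
  obtain B where "finite B" "W.span (\<Union>s\<in>{..0}. Wr V W s) \<subseteq> W.span B"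
    using drg unfolding is_drg_mod_def by blast
  then have "\<exists>b. \<forall>r<b. \<forall>w. L0 w = mscale W (of_real r) w \<longrightarrow> w = 0"
    by (intro W.eigenvalues_bounded_below[OF L0_add L0_scale]) (auto simp: inj_def Wr_def)
  then show ?thesis by (auto simp: Wr_def)
qed

lemma mY_Wr:
  assumes u: "u \<in> Vn V k" and w: "w \<in> Wr V W t"
  shows "mY W u n w \<in> Wr V W (t + of_int k - of_int n - 1)"
proof -
  obtain N where N: "\<forall>M\<ge>N. (\<Sum>i=0..M. mscale W (of_int 1 gchoose i)
        (mY W (vY V (omega V) (int i) u) (1 + n - int i) w)) = L0 (mY W u n w) - mY W u n (L0 w)"
    using mY_commutator[of 1 "omega V" u n w] by blast
  \<comment> \<open>with \<open>L(-1) = \<omega>_0\<close> and \<open>L(0) = \<omega>_1\<close>, the commutator formula reads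
    \<open>[L(0), u_n] = (L(-1)u)_{n+1} + (L(0)u)_n = (k - n - 1) u_n\<close>\<close>
  have "(\<Sum>i=0..max N 1. mscale W (of_int 1 gchoose i)
          (mY W (vY V (omega V) (int i) u) (1 + n - int i) w))
      = mY W (vY V (omega V) 0 u) (1 + n) w + mY W (vY V (omega V) 1 u) n w"
    by (subst sum_atLeast0_atMost_eq_first_two) (auto simp: gbinomial_1_left)
  then have "mY W (vY V (omega V) 0 u) (1 + n) w + mY W (vY V (omega V) 1 u) n w
      = L0 (mY W u n w) - mY W u n (L0 w)"
    using N by simp
  moreover have "mY W (vY V (omega V) 0 u) (1 + n) w = mscale W (- of_int (1 + n)) (mY W u n w)"
    using mY_L_minus_1[of u "1 + n" w] by simp
  moreover have "mY W (vY V (omega V) 1 u) n w = mscale W (of_int k) (mY W u n w)"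
    using u is_linear_scale[OF mY_linear_vertex] by (simp add: Vn_def)
  moreover have "mY W u n (L0 w) = mscale W (of_real t) (mY W u n w)"
    using w is_linear_scale[OF mY_linear] by (simp add: Wr_def)
  ultimately have "L0 (mY W u n w) = mscale W (- of_int (1 + n)) (mY W u n w)
      + mscale W (of_int k) (mY W u n w) + mscale W (of_real t) (mY W u n w)"
    by (metis diff_add_cancel)
  also have "\<dots> = mscale W (of_real (t + of_int k - of_int n - 1)) (mY W u n w)"
    by (simp only: W.scale_left_distrib[symmetric]) (simp add: algebra_simps)
  finally show ?thesis by (simp add: Wr_def)
qed

lemma L0_eigenvalue_real:
  assumes "L0 w = mscale W c w" "w \<noteq> 0"
  shows "c = of_real (Re c)"
proof (rule ccontr)
  assume not_real: "c \<noteq> of_real (Re c)"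
  obtain S comp where S: "finite S" "\<forall>r\<in>S. comp r \<in> Wr V W r" "w = (\<Sum>r\<in>S. comp r)"
    using homogeneous_decomposition by blast
  define y where "y r = mscale W (of_real r - c) (comp r)" for r
  have "sum y S = L0 w - mscale W c w"
    unfolding y_def S(3) is_linear_sum[OF mY_linear] using S(2)
    by (simp add: W.scale_left_diff_distrib sum_subtractf W.scale_sum_right Wr_def)
  then have "\<forall>r\<in>S. y r = 0"
    using S(1,2) assms(1)
    by (intro W.eigenvectors_sum_eq_0_imp_eq_0[OF L0_add L0_scale, of S y of_real])
      (auto simp: y_def L0_scale Wr_def W.scale_left_commute inj_on_def)
  moreover have "of_real r - c \<noteq> 0" for r
    using not_real by (metis Re_complex_of_real right_minus_eq)
  ultimately have "\<forall>r\<in>S. comp r = 0" by (simp add: y_def)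
  with S(3) assms(2) show False by simp
qed

lemma homogeneous_in_span_Wr_part:
  assumes "\<forall>t\<in>T. \<exists>s. t \<in> Wr V W s" "w \<in> W.span T" "w \<in> Wr V W r"
  shows "w \<in> W.span {t\<in>T. t \<in> Wr V W r}"
  using W.eigenvector_in_span_eigenvectors_same_eigenvalue[OF L0_add L0_scale, of of_real T w r] assms
  by (simp add: Wr_def inj_def)

lemma contra_comp_mY:
  assumes g: "g \<in> contra V W" and u: "u \<in> Vn V k"
  shows "(\<lambda>w. g (mY W u n w)) \<in> contra V W"
proof -
  obtain R where R: "finite R" "\<forall>r. r \<notin> R \<longrightarrow> (\<forall>w\<in>Wr V W r. g w = 0)"
    using contra_finite_support[OF g] by blast
  have "\<forall>r. r \<notin> (\<lambda>s. s - of_int k + of_int n + 1) ` R \<longrightarrow> (\<forall>w\<in>Wr V W r. g (mY W u n w) = 0)"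
  proof (intro allI impI ballI)
    fix r w assume "r \<notin> (\<lambda>s. s - of_int k + of_int n + 1) ` R" and w: "w \<in> Wr V W r"
    then have "r + of_int k - of_int n - 1 \<notin> R"
      using imageI[of "r + of_int k - of_int n - 1" R "\<lambda>s. s - of_int k + of_int n + 1"] by auto
    then show "g (mY W u n w) = 0" using R(2) mY_Wr[OF u w] by blast
  qed
  then show ?thesis
    using g R(1) is_linear_add[OF mY_linear] is_linear_scale[OF mY_linear]
    by (auto simp: contra_def intro!: exI[of _ "(\<lambda>s. s - of_int k + of_int n + 1) ` R"])
qed

lemma contra_separates:
  assumes "\<forall>g\<in>contra V W. g w = 0"
  shows "w = 0"
proof (rule ccontr)
  assume "w \<noteq> 0"
  obtain S comp where S: "finite S" "\<forall>r\<in>S. comp r \<in> Wr V W r" "w = (\<Sum>r\<in>S. comp r)"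
    using homogeneous_decomposition by blast
  obtain r where r: "r \<in> S" "comp r \<noteq> 0" using S(3) \<open>w \<noteq> 0\<close> by (metis sum.neutral)
  define U where "U = (\<Union>s\<in>-{r}. Wr V W s)"
  have comp_r_notin: "comp r \<notin> W.span U"
  proof
    assume "comp r \<in> W.span U"
    then have "comp r \<in> W.span {t\<in>U. t \<in> Wr V W r}"
      using S(2) r(1) by (intro homogeneous_in_span_Wr_part) (auto simp: U_def)
    moreover have "{t\<in>U. t \<in> Wr V W r} \<subseteq> {0}"
      using Wr_eq_0_if_two_weights by (auto simp: U_def)
    ultimately have "comp r \<in> W.span {0}" using W.span_mono by blast
    with r(2) show False by (simp add: W.span_singleton)
  qed
  \<comment> \<open>a functional that is \<open>1\<close> on \<open>comp r\<close> and kills all other weight spaces lies in \<open>W'\<close>\<close>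
  obtain \<phi> where \<phi>: "Vector_Spaces.linear (mscale W) (*) \<phi>" "\<phi> (comp r) = 1"
    "\<And>x. x \<in> U \<Longrightarrow> \<phi> x = 0"
    using W.exists_linear_functional_separating[OF comp_r_notin] by blast
  have \<phi>_contra: "\<phi> \<in> contra V W"
    using \<phi>(1,3) unfolding contra_def Vector_Spaces.linear_iff U_def
    by (auto intro!: exI[of _ "{r}"])
  have "\<phi> w = (\<Sum>s\<in>S. \<phi> (comp s))" using S(3) contra_sum[OF \<phi>_contra] by simp
  also have "\<dots> = \<phi> (comp r) + (\<Sum>s\<in>S - {r}. \<phi> (comp s))"
    using S(1) r(1) by (rule sum.remove)
  also have "(\<Sum>s\<in>S - {r}. \<phi> (comp s)) = 0"
    using S(2) \<phi>(3) by (intro sum.neutral) (auto simp: U_def)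
  finally have "\<phi> w = 1" using \<phi>(2) by simp
  with assms \<phi>_contra show False by auto
qed

definition C1_generators :: "real \<Rightarrow> 'w set" where
  "C1_generators r = {mY W u (-1) x | u x k. k > 0 \<and> u \<in> Vn V k \<and> x \<in> Wr V W (r - of_int k)}"

lemma C1_generators_Wr:
  assumes "t \<in> C1_generators r"
  shows "t \<in> Wr V W r"
proof -
  obtain u x k where "t = mY W u (-1) x" "u \<in> Vn V k" "x \<in> Wr V W (r - of_int k)"
    using assms by (auto simp: C1_generators_def)
  then show ?thesis using mY_Wr[of u k x "r - of_int k" "-1"] by simp
qed

lemma C1_subset_span_C1_generators: "C1 V W \<subseteq> W.span (\<Union>r. C1_generators r)"
proof -
  have "mY W u (-1) x \<in> W.span (\<Union>r. C1_generators r)" if "u \<in> Vplus V" for u x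
  proof -
    have "u \<in> V.span (\<Union>n\<in>{0<..}. Vn V n)" using that by (simp add: Vplus_def)
    then have "\<forall>x. mY W u (-1) x \<in> W.span (\<Union>r. C1_generators r)"
    proof (induction rule: V.span_induct)
      case base
      show ?case
        unfolding V.subspace_def
        using is_linear_zero[OF mY_linear_vertex] is_linear_add[OF mY_linear_vertex]
          is_linear_scale[OF mY_linear_vertex]
        by (auto intro: W.span_add W.span_scale W.span_zero)
    next
      case (step u)
      then obtain k where k: "k > 0" "u \<in> Vn V k" by auto
      show ?case
      proof
        fix x
        obtain S comp where S: "finite S" "\<forall>r\<in>S. comp r \<in> Wr V W r" "x = (\<Sum>r\<in>S. comp r)"
          using homogeneous_decomposition by blast
        have "mY W u (-1) (comp r) \<in> C1_generators (r + of_int k)" if "r \<in> S" for r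
          unfolding C1_generators_def using k S(2) that
          by (intro CollectI exI[of _ u] exI[of _ "comp r"] exI[of _ k]) simp
        then have "(\<Sum>r\<in>S. mY W u (-1) (comp r)) \<in> W.span (\<Union>r. C1_generators r)"
          by (intro W.span_sum W.span_base) blast
        moreover have "mY W u (-1) x = (\<Sum>r\<in>S. mY W u (-1) (comp r))"
          unfolding S(3) by (rule is_linear_sum[OF mY_linear])
        ultimately show "mY W u (-1) x \<in> W.span (\<Union>r. C1_generators r)" by simp
      qed
    qed
    then show ?thesis by blast
  qed
  then show ?thesis
    unfolding C1_def by (intro W.span_minimal) auto
qed

definition spans_modulo_C1 :: "('w \<times> real) set \<Rightarrow> bool" where
  "spans_modulo_C1 HH \<longleftrightarrow> (\<forall>(h, r)\<in>HH. h \<in> Wr V W r)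
     \<and> (\<forall>r. Wr V W r \<subseteq> W.span ({h. (h, r) \<in> HH} \<union> C1_generators r))"

lemma C1_cofinite_imp_homogeneous_spanning_set:
  assumes "C1_cofinite V W"
  shows "\<exists>HH. finite HH \<and> (\<forall>(h, r)\<in>HH. h \<in> Wr V W r)
    \<and> W.span (fst ` HH \<union> (\<Union>r. C1_generators r)) = UNIV"
proof -
  obtain F where F: "finite F" "W.span (F \<union> C1 V W) = UNIV"
    using assms by (auto simp: C1_cofinite_def)
  obtain Sf cf where Sf: "\<And>w. finite (Sf w)" "\<And>w r. r \<in> Sf w \<Longrightarrow> cf w r \<in> Wr V W r"
      "\<And>w. w = (\<Sum>r\<in>Sf w. cf w r)"
    using homogeneous_decomposition by metis
  define HH where "HH = (\<Union>w\<in>F. (\<lambda>r. (cf w r, r)) ` Sf w)"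
  define T where "T = fst ` HH \<union> (\<Union>r. C1_generators r)"
  have "F \<subseteq> W.span T"
  proof
    fix w assume "w \<in> F"
    have "cf w r \<in> T" if "r \<in> Sf w" for r
    proof -
      have "(cf w r, r) \<in> HH" using \<open>w \<in> F\<close> that by (auto simp: HH_def)
      then show ?thesis unfolding T_def by (metis UnI1 fst_conv image_eqI)
    qed
    then have "(\<Sum>r\<in>Sf w. cf w r) \<in> W.span T" by (intro W.span_sum W.span_base)
    then show "w \<in> W.span T" using Sf(3)[of w] by simp
  qed
  moreover have "C1 V W \<subseteq> W.span T"
  proof -
    have "(\<Union>r. C1_generators r) \<subseteq> T" by (auto simp: T_def)
    then show ?thesis using C1_subset_span_C1_generators W.span_mono by blast
  qed
  ultimately have "W.span (F \<union> C1 V W) \<subseteq> W.span T"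
    using W.span_minimal[OF _ W.subspace_span] by (metis Un_least)
  then have "W.span T = UNIV" using F(2) by auto
  moreover have "finite HH" using F(1) Sf(1) by (simp add: HH_def)
  moreover have "\<forall>(h, r)\<in>HH. h \<in> Wr V W r" using Sf(2) by (auto simp: HH_def)
  ultimately show ?thesis unfolding T_def by blast
qed

lemma C1_cofinite_imp_spans_modulo_C1:
  assumes "C1_cofinite V W"
  shows "\<exists>HH. finite HH \<and> spans_modulo_C1 HH"
proof -
  obtain HH where HH: "finite HH" "\<And>h r. (h, r) \<in> HH \<Longrightarrow> h \<in> Wr V W r"
    "W.span (fst ` HH \<union> (\<Union>r. C1_generators r)) = UNIV"
    using C1_cofinite_imp_homogeneous_spanning_set[OF assms] by auto
  define T where "T = fst ` HH \<union> (\<Union>r. C1_generators r)"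
  have T_Wr: "\<exists>s. t \<in> Wr V W s \<and> ((t, s) \<in> HH \<or> t \<in> C1_generators s)" if "t \<in> T" for t
  proof -
    from that consider p where "p \<in> HH" "t = fst p" | s where "t \<in> C1_generators s"
      unfolding T_def by blast
    then show ?thesis
    proof cases
      case (1 p)
      then show ?thesis using HH(2)[of t "snd p"] by (metis prod.collapse)
    next
      case (2 s)
      then show ?thesis using C1_generators_Wr by blast
    qed
  qed
  have "Wr V W r \<subseteq> W.span ({h. (h, r) \<in> HH} \<union> C1_generators r)" for r
  proof
    fix w assume "w \<in> Wr V W r"
    then have "w \<in> W.span {t\<in>T. t \<in> Wr V W r}"
      using T_Wr HH(3) by (intro homogeneous_in_span_Wr_part) (auto simp: T_def)
    moreover have "{t\<in>T. t \<in> Wr V W r} \<subseteq> W.span ({h. (h, r) \<in> HH} \<union> C1_generators r)"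
    proof
      fix t assume t: "t \<in> {t\<in>T. t \<in> Wr V W r}"
      then obtain s where s: "t \<in> Wr V W s" "(t, s) \<in> HH \<or> t \<in> C1_generators s"
        using T_Wr by blast
      show "t \<in> W.span ({h. (h, r) \<in> HH} \<union> C1_generators r)"
      proof (cases "s = r")
        case True
        then show ?thesis using s(2) by (intro W.span_base) auto
      next
        case False
        then show ?thesis using t s(1) Wr_eq_0_if_two_weights[of t s r] by (simp add: W.span_zero)
      qed
    qed
    ultimately show "w \<in> W.span ({h. (h, r) \<in> HH} \<union> C1_generators r)"
      using W.span_minimal[OF _ W.subspace_span] by blast
  qed
  then show ?thesis
    using HH(1,2) by (intro exI[of _ HH]) (auto simp: spans_modulo_C1_def)
qed

end

section \<open>Intertwining operators\<close>

locale three_drg_modules = M1: drg_module V W1 + M2: drg_module V W2 + M3: drg_module V W3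
  for V :: "('v::ab_group_add) voa" and W1 :: "('v, 'w1::ab_group_add) vmod"
    and W2 :: "('v, 'w2::ab_group_add) vmod" and W3 :: "('v, 'w3::ab_group_add) vmod"

text \<open>The sum of the weights of \<open>w\<^sub>1 \<in> W\<^sub>1[r\<^sub>1]\<close>, of \<open>w\<^sub>2 \<in> W\<^sub>2[r\<^sub>2]\<close> and of
  \<open>(w\<^sub>1)\<^sub>a w\<^sub>2 \<in> W\<^sub>3[r\<^sub>1 + r\<^sub>2 - a - 1]\<close>; the induction below runs over it.\<close>
definition level :: "real \<Rightarrow> real \<Rightarrow> complex \<Rightarrow> real" where
  "level r1 r2 a = 2 * r1 + 2 * r2 - Re a - 1"

locale intertwining_operator = three_drg_modules V W1 W2 W3
  for V :: "('v::ab_group_add) voa" and W1 :: "('v, 'w1::ab_group_add) vmod"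
    and W2 :: "('v, 'w2::ab_group_add) vmod" and W3 :: "('v, 'w3::ab_group_add) vmod" +
  fixes I :: "'w1 \<Rightarrow> complex \<Rightarrow> 'w2 \<Rightarrow> 'w3"
  assumes intertwining: "is_intertwining V W1 W2 W3 I"
begin

lemma I_linear_right: "is_linear (mscale W2) (mscale W3) (I w1 n)"
  using intertwining by (simp add: is_intertwining_def)

lemma I_linear_left: "is_linear (mscale W1) (mscale W3) (\<lambda>w1. I w1 n w2)"
  using intertwining by (simp add: is_intertwining_def)

lemma I_L_minus_1: "I (mY W1 (omega V) 0 w1) n w2 = mscale W3 (- n) (I w1 (n - 1) w2)"
  using intertwining by (simp add: is_intertwining_def)

lemma I_jacobi: "\<exists>N. \<forall>M\<ge>N.
        (\<Sum>i=0..M. mscale W3 (of_int p gchoose i)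
            (I (mY W1 v (q + int i) w1) (of_int p + a - of_nat i) w2))
      = (\<Sum>i=0..M. mscale W3 ((-1) ^ i * (of_int q gchoose i))
           (mY W3 v (p + q - int i) (I w1 (a + of_nat i) w2)
            - mscale W3 ((-1) powi q) (I w1 (of_int q + a - of_nat i) (mY W2 v (p + int i) w2))))"
  using intertwining unfolding is_intertwining_def by blast

lemma I_commutator: "\<exists>N. \<forall>M\<ge>N.
        (\<Sum>i=0..M. mscale W3 (of_int p gchoose i) (I (mY W1 v (int i) w1) (of_int p + a - of_nat i) w2))
      = mY W3 v p (I w1 a w2) - I w1 a (mY W2 v p w2)"
proof -
  obtain N where N: "\<forall>M\<ge>N.
        (\<Sum>i=0..M. mscale W3 (of_int p gchoose i)
            (I (mY W1 v (0 + int i) w1) (of_int p + a - of_nat i) w2))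
      = (\<Sum>i=0..M. mscale W3 ((-1) ^ i * (of_int 0 gchoose i))
           (mY W3 v (p + 0 - int i) (I w1 (a + of_nat i) w2)
            - mscale W3 ((-1) powi 0) (I w1 (of_int 0 + a - of_nat i) (mY W2 v (p + int i) w2))))"
    using I_jacobi[of p v 0 w1 a w2] by blast
  have rhs: "(\<Sum>i=0..M. mscale W3 ((-1) ^ i * (of_int 0 gchoose i))
           (mY W3 v (p + 0 - int i) (I w1 (a + of_nat i) w2)
            - mscale W3 ((-1) powi 0) (I w1 (of_int 0 + a - of_nat i) (mY W2 v (p + int i) w2))))
      = mY W3 v p (I w1 a w2) - I w1 a (mY W2 v p w2)" for M
    by (subst sum_atLeast0_atMost_eq_first) (auto simp: gbinomial_0_left)
  show ?thesis using N unfolding rhs by auto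
qed

lemma I_associator: "\<exists>N. \<forall>M\<ge>N. I (mY W1 v (-1) w1) a w2
      = (\<Sum>i=0..M. mscale W3 ((-1) ^ i * (of_int (-1) gchoose i))
           (mY W3 v (-1 - int i) (I w1 (a + of_nat i) w2)
            - mscale W3 ((-1) powi (-1)) (I w1 (of_int (-1) + a - of_nat i) (mY W2 v (int i) w2))))"
proof -
  obtain N where N: "\<forall>M\<ge>N.
        (\<Sum>i=0..M. mscale W3 (of_int 0 gchoose i)
            (I (mY W1 v (-1 + int i) w1) (of_int 0 + a - of_nat i) w2))
      = (\<Sum>i=0..M. mscale W3 ((-1) ^ i * (of_int (-1) gchoose i))
           (mY W3 v (0 + (-1) - int i) (I w1 (a + of_nat i) w2)
            - mscale W3 ((-1) powi (-1)) (I w1 (of_int (-1) + a - of_nat i) (mY W2 v (0 + int i) w2))))"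
    using I_jacobi[of 0 v "-1" w1 a w2] by blast
  have lhs: "(\<Sum>i=0..M. mscale W3 (of_int 0 gchoose i)
            (I (mY W1 v (-1 + int i) w1) (of_int 0 + a - of_nat i) w2)) = I (mY W1 v (-1) w1) a w2" for M
    by (subst sum_atLeast0_atMost_eq_first) (auto simp: gbinomial_0_left)
  show ?thesis using N unfolding lhs by auto
qed

lemma I_L0:
  assumes w1: "w1 \<in> Wr V W1 r1" and w2: "w2 \<in> Wr V W2 r2"
  shows "M3.L0 (I w1 a w2) = mscale W3 (of_real r1 + of_real r2 - a - 1) (I w1 a w2)"
proof -
  obtain N where N: "\<forall>M\<ge>N. (\<Sum>i=0..M. mscale W3 (of_int 1 gchoose i)
        (I (mY W1 (omega V) (int i) w1) (of_int 1 + a - of_nat i) w2))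
      = M3.L0 (I w1 a w2) - I w1 a (M2.L0 w2)"
    using I_commutator[of 1 "omega V" w1 a w2] by blast
  have "(\<Sum>i=0..max N 1. mscale W3 (of_int 1 gchoose i)
          (I (mY W1 (omega V) (int i) w1) (of_int 1 + a - of_nat i) w2))
      = I (mY W1 (omega V) 0 w1) (1 + a) w2 + I (mY W1 (omega V) 1 w1) a w2"
    by (subst sum_atLeast0_atMost_eq_first_two) (auto simp: gbinomial_1_left)
  then have "I (mY W1 (omega V) 0 w1) (1 + a) w2 + I (mY W1 (omega V) 1 w1) a w2
      = M3.L0 (I w1 a w2) - I w1 a (M2.L0 w2)"
    using N by simp
  moreover have "I (mY W1 (omega V) 0 w1) (1 + a) w2 = mscale W3 (- (1 + a)) (I w1 a w2)"
    using I_L_minus_1[of w1 "1 + a" w2] by simp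
  moreover have "I (mY W1 (omega V) 1 w1) a w2 = mscale W3 (of_real r1) (I w1 a w2)"
    using w1 is_linear_scale[OF I_linear_left] by (simp add: Wr_def)
  moreover have "I w1 a (M2.L0 w2) = mscale W3 (of_real r2) (I w1 a w2)"
    using w2 is_linear_scale[OF I_linear_right] by (simp add: Wr_def)
  ultimately have "M3.L0 (I w1 a w2) = mscale W3 (- (1 + a)) (I w1 a w2)
      + mscale W3 (of_real r1) (I w1 a w2) + mscale W3 (of_real r2) (I w1 a w2)"
    by (metis diff_add_cancel)
  also have "\<dots> = mscale W3 (of_real r1 + of_real r2 - a - 1) (I w1 a w2)"
    by (simp only: M3.W.scale_left_distrib[symmetric]) (simp add: algebra_simps)
  finally show ?thesis .
qed

lemma I_nonzero_imp_real:
  assumes "w1 \<in> Wr V W1 r1" "w2 \<in> Wr V W2 r2" "I w1 a w2 \<noteq> 0"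
  shows "a = of_real (Re a)"
proof -
  have "of_real r1 + of_real r2 - a - 1 = of_real (Re (of_real r1 + of_real r2 - a - 1))"
    using M3.L0_eigenvalue_real[OF I_L0[OF assms(1,2)] assms(3)] .
  then show ?thesis by (simp add: complex_eq_iff)
qed

lemma I_Wr:
  assumes "w1 \<in> Wr V W1 r1" "w2 \<in> Wr V W2 r2"
  shows "I w1 a w2 \<in> Wr V W3 (r1 + r2 - Re a - 1)"
proof (cases "I w1 a w2 = 0")
  case True
  then show ?thesis by (simp add: Wr_def is_linear_zero[OF M3.mY_linear])
next
  case False
  then have "of_real r1 + of_real r2 - a - 1 = of_real (r1 + r2 - Re a - 1)"
    using I_nonzero_imp_real[OF assms] by (metis of_real_add of_real_diff of_real_1)
  then show ?thesis using I_L0[OF assms, of a] by (simp add: Wr_def)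
qed

lemma coeff_vanishes_on_span_left:
  assumes "g \<in> contra V W3" "w1 \<in> M1.W.span S" "\<And>s. s \<in> S \<Longrightarrow> g (I s a w2) = 0"
  shows "g (I w1 a w2) = 0"
proof -
  have "M1.W.subspace {x. g (I x a w2) = 0}"
    unfolding M1.W.subspace_def
    using is_linear_zero[OF I_linear_left] is_linear_add[OF I_linear_left]
      is_linear_scale[OF I_linear_left] contra_zero[OF assms(1)] contra_add[OF assms(1)] contra_scale[OF assms(1)]
    by simp
  then have "M1.W.span S \<subseteq> {x. g (I x a w2) = 0}"
    using assms(3) by (intro M1.W.span_minimal) auto
  then show ?thesis using assms(2) by blast
qed

lemma coeff_vanishes_on_span_right:
  assumes "g \<in> contra V W3" "w2 \<in> M2.W.span S" "\<And>s. s \<in> S \<Longrightarrow> g (I w1 a s) = 0"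
  shows "g (I w1 a w2) = 0"
proof -
  have "M2.W.subspace {x. g (I w1 a x) = 0}"
    unfolding M2.W.subspace_def
    using is_linear_zero[OF I_linear_right] is_linear_add[OF I_linear_right]
      is_linear_scale[OF I_linear_right] contra_zero[OF assms(1)] contra_add[OF assms(1)] contra_scale[OF assms(1)]
    by simp
  then have "M2.W.span S \<subseteq> {x. g (I w1 a x) = 0}"
    using assms(3) by (intro M2.W.span_minimal) auto
  then show ?thesis using assms(2) by blast
qed

end

context intertwining_operator
begin

definition coeffs_vanish_below :: "real \<Rightarrow> bool" where
  "coeffs_vanish_below c \<longleftrightarrow> (\<forall>r1 r2 w1 w2 a g. w1 \<in> Wr V W1 r1 \<longrightarrow> w2 \<in> Wr V W2 r2 \<longrightarrow>
      g \<in> contra V W3 \<longrightarrow> level r1 r2 a < c \<longrightarrow> g (I w1 a w2) = 0)"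

lemma coeffs_vanish_belowD:
  "coeffs_vanish_below c \<Longrightarrow> w1 \<in> Wr V W1 r1 \<Longrightarrow> w2 \<in> Wr V W2 r2 \<Longrightarrow> g \<in> contra V W3 \<Longrightarrow>
    level r1 r2 a < c \<Longrightarrow> g (I w1 a w2) = 0"
  unfolding coeffs_vanish_below_def by blast

lemma coeffs_vanish_below_lowest: "\<exists>b. coeffs_vanish_below b"
proof -
  obtain b1 where b1: "\<forall>r<b1. \<forall>w\<in>Wr V W1 r. w = 0" using M1.weights_bounded_below by blast
  obtain b2 where b2: "\<forall>r<b2. \<forall>w\<in>Wr V W2 r. w = 0" using M2.weights_bounded_below by blast
  obtain b3 where b3: "\<forall>r<b3. \<forall>w\<in>Wr V W3 r. w = 0" using M3.weights_bounded_below by blast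
  have "I w1 a w2 = 0"
    if w1: "w1 \<in> Wr V W1 r1" and w2: "w2 \<in> Wr V W2 r2" and "level r1 r2 a < b1 + b2 + b3"
    for w1 w2 r1 r2 a
  proof (rule ccontr)
    assume nonzero: "I w1 a w2 \<noteq> 0"
    then have "w1 \<noteq> 0" "w2 \<noteq> 0"
      using is_linear_zero[OF I_linear_left] is_linear_zero[OF I_linear_right] by metis+
    then have "b1 \<le> r1" "b2 \<le> r2" using b1 b2 w1 w2 by (meson not_less)+
    moreover have "b3 \<le> r1 + r2 - Re a - 1"
      using b3 I_Wr[OF w1 w2, of a] nonzero by (meson not_less)
    ultimately show False using \<open>level r1 r2 a < b1 + b2 + b3\<close> by (simp add: level_def)
  qed
  then have "coeffs_vanish_below (b1 + b2 + b3)"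
    by (auto simp: coeffs_vanish_below_def contra_zero)
  then show ?thesis by blast
qed

lemma coeff_C1_left_vanishes:
  assumes vanish: "coeffs_vanish_below c" and k: "k > 0" "u \<in> Vn V k"
    and x: "x \<in> Wr V W1 (r1 - of_int k)" and w2: "w2 \<in> Wr V W2 r2" and g: "g \<in> contra V W3"
    and lev: "level r1 r2 a < c + 1"
  shows "g (I (mY W1 u (-1) x) a w2) = 0"
proof -
  obtain N where N: "\<forall>M\<ge>N. I (mY W1 u (-1) x) a w2
      = (\<Sum>i=0..M. mscale W3 ((-1) ^ i * (of_int (-1) gchoose i))
           (mY W3 u (-1 - int i) (I x (a + of_nat i) w2)
            - mscale W3 ((-1) powi (-1)) (I x (of_int (-1) + a - of_nat i) (mY W2 u (int i) w2))))"
    using I_associator by blast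
  have "g (mY W3 u (-1 - int i) (I x (a + of_nat i) w2)) = 0" for i
    using coeffs_vanish_belowD[OF vanish x w2 M3.contra_comp_mY[OF g k(2)], where a = "a + of_nat i"] lev k(1)
    by (simp add: level_def)
  moreover have "g (I x (of_int (-1) + a - of_nat i) (mY W2 u (int i) w2)) = 0" for i
    using coeffs_vanish_belowD[OF vanish x M2.mY_Wr[OF k(2) w2] g, where a = "of_int (-1) + a - of_nat i"] lev
    by (simp add: level_def)
  ultimately show ?thesis
    unfolding N[rule_format, OF order_refl]
    by (simp add: contra_sum[OF g] contra_scale[OF g] contra_add[OF g] contra_diff[OF g])
qed

lemma coeff_C1_right_vanishes:
  assumes vanish: "coeffs_vanish_below c" and k: "k > 0" "u \<in> Vn V k"
    and x: "x \<in> Wr V W2 (r2 - of_int k)" and w1: "w1 \<in> Wr V W1 r1" and g: "g \<in> contra V W3"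
    and lev: "level r1 r2 a < c + 1"
  shows "g (I w1 a (mY W2 u (-1) x)) = 0"
proof -
  obtain N where N: "\<forall>M\<ge>N.
        (\<Sum>i=0..M. mscale W3 (of_int (-1) gchoose i) (I (mY W1 u (int i) w1) (of_int (-1) + a - of_nat i) x))
      = mY W3 u (-1) (I w1 a x) - I w1 a (mY W2 u (-1) x)"
    using I_commutator by blast
  have "g (mY W3 u (-1) (I w1 a x)) = 0"
    using coeffs_vanish_belowD[OF vanish w1 x M3.contra_comp_mY[OF g k(2)], where a = a] lev k(1)
    by (simp add: level_def)
  moreover have "g (I (mY W1 u (int i) w1) (of_int (-1) + a - of_nat i) x) = 0" for i
    using coeffs_vanish_belowD[OF vanish M1.mY_Wr[OF k(2) w1] x g, where a = "of_int (-1) + a - of_nat i"] lev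
    by (simp add: level_def)
  ultimately have "g (mY W3 u (-1) (I w1 a x) - I w1 a (mY W2 u (-1) x)) = 0"
    unfolding N[rule_format, OF order_refl, symmetric]
    by (simp add: contra_sum[OF g] contra_scale[OF g])
  with \<open>g (mY W3 u (-1) (I w1 a x)) = 0\<close> show ?thesis by (simp add: contra_diff[OF g])
qed

lemma coeff_C1_contra_vanishes:
  assumes vanish: "coeffs_vanish_below c" and k: "k > 0" "u \<in> Vn V k" and f: "f \<in> contra V W3"
    and w1: "w1 \<in> Wr V W1 r1" and w2: "w2 \<in> Wr V W2 r2" and lev: "level r1 r2 a < c + 1"
  shows "contra_mode V W3 k u (-1) f (I w1 a w2) = 0"
proof -
  have "f (mY W3 (L1pow V j u) p (I w1 a w2)) = 0" if p: "p = 2 * k - int j - 1" for j p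
  proof -
    define v where "v = L1pow V j u"
    have v: "v \<in> Vn V (k - int j)" unfolding v_def by (rule M1.L1pow_Vn[OF k(2)])
    obtain N where N: "\<forall>M\<ge>N.
        (\<Sum>i=0..M. mscale W3 (of_int p gchoose i) (I (mY W1 v (int i) w1) (of_int p + a - of_nat i) w2))
      = mY W3 v p (I w1 a w2) - I w1 a (mY W2 v p w2)"
      using I_commutator by blast
    \<comment> \<open>\<open>p\<close> is chosen so that \<open>v\<^sub>p\<close> lowers the weight by \<open>k\<close>, hence the level by \<open>2k \<ge> 2\<close>\<close>
    have "f (I w1 a (mY W2 v p w2)) = 0"
      using coeffs_vanish_belowD[OF vanish w1 M2.mY_Wr[OF v w2] f, where a = a] lev k(1) p
      by (simp add: level_def)
    moreover have "f (I (mY W1 v (int i) w1) (of_int p + a - of_nat i) w2) = 0" for i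
      using coeffs_vanish_belowD[OF vanish M1.mY_Wr[OF v w1] w2 f, where a = "of_int p + a - of_nat i"] lev p
      by (simp add: level_def)
    ultimately have "f (mY W3 v p (I w1 a w2) - I w1 a (mY W2 v p w2)) = 0
        \<and> f (I w1 a (mY W2 v p w2)) = 0"
      unfolding N[rule_format, OF order_refl, symmetric]
      by (simp add: contra_sum[OF f] contra_scale[OF f])
    then show ?thesis by (simp add: contra_diff[OF f] v_def)
  qed
  then show ?thesis by (simp add: contra_mode_def)
qed

lemma coeff_base_left_vanishes:
  assumes HH2: "M2.spans_modulo_C1 HH2" and F3: "contra V W3 \<subseteq> fun_span (F3 \<union> C1_contra V W3)"
    and base: "\<And>f h2 r2. f \<in> F3 \<Longrightarrow> (h2, r2) \<in> HH2 \<Longrightarrow> f (I h a h2) = 0"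
    and vanish: "coeffs_vanish_below c" and h: "h \<in> Wr V W1 r1" and y: "y \<in> Wr V W2 r2"
    and g: "g \<in> contra V W3" and lev: "level r1 r2 a < c + 1"
  shows "g (I h a y) = 0"
proof (rule coeff_vanishes_on_span_right[OF g])
  show "y \<in> M2.W.span ({h. (h, r2) \<in> HH2} \<union> M2.C1_generators r2)"
    using y HH2 by (auto simp: M2.spans_modulo_C1_def)
  fix s assume "s \<in> {h. (h, r2) \<in> HH2} \<union> M2.C1_generators r2"
  then consider "(s, r2) \<in> HH2" | "s \<in> M2.C1_generators r2" by blast
  then show "g (I h a s) = 0"
  proof cases
    case 1
    then have s_Wr: "s \<in> Wr V W2 r2" using HH2 by (auto simp: M2.spans_modulo_C1_def)
    have "f (I h a s) = 0" if "f \<in> C1_contra V W3" for f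
      using that unfolding C1_contra_def
      by (rule fun_span_eq_0) (auto intro: coeff_C1_contra_vanishes[OF vanish _ _ _ h s_Wr lev])
    then show ?thesis
      using g F3 base[OF _ 1] by (intro fun_span_eq_0[of g "F3 \<union> C1_contra V W3"]) auto
  next
    case 2
    then show ?thesis
      unfolding M2.C1_generators_def using coeff_C1_right_vanishes[OF vanish _ _ _ h g lev] by auto
  qed
qed

lemma coeffs_vanish_below_add_1:
  assumes HH1: "M1.spans_modulo_C1 HH1" and HH2: "M2.spans_modulo_C1 HH2"
    and F3: "contra V W3 \<subseteq> fun_span (F3 \<union> C1_contra V W3)"
    and base: "\<And>f h1 r1 h2 r2 a. f \<in> F3 \<Longrightarrow> (h1, r1) \<in> HH1 \<Longrightarrow> (h2, r2) \<in> HH2 \<Longrightarrow> f (I h1 a h2) = 0"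
    and vanish: "coeffs_vanish_below c"
  shows "coeffs_vanish_below (c + 1)"
  unfolding coeffs_vanish_below_def
proof (intro allI impI)
  fix r1 r2 w1 w2 a g
  assume w1: "w1 \<in> Wr V W1 r1" and w2: "w2 \<in> Wr V W2 r2" and g: "g \<in> contra V W3"
    and lev: "level r1 r2 a < c + 1"
  show "g (I w1 a w2) = 0"
  proof (rule coeff_vanishes_on_span_left[OF g])
    show "w1 \<in> M1.W.span ({h. (h, r1) \<in> HH1} \<union> M1.C1_generators r1)"
      using w1 HH1 by (auto simp: M1.spans_modulo_C1_def)
    fix s assume "s \<in> {h. (h, r1) \<in> HH1} \<union> M1.C1_generators r1"
    then consider "(s, r1) \<in> HH1" | "s \<in> M1.C1_generators r1" by blast
    then show "g (I s a w2) = 0"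
    proof cases
      case 1
      then have "s \<in> Wr V W1 r1" using HH1 by (auto simp: M1.spans_modulo_C1_def)
      with 1 show ?thesis
        using coeff_base_left_vanishes[OF HH2 F3 _ vanish _ w2 g lev] base by blast
    next
      case 2
      then show ?thesis
        unfolding M1.C1_generators_def using coeff_C1_left_vanishes[OF vanish _ _ _ w2 g lev] by auto
    qed
  qed
qed

lemma eq_0_if_base_coeffs_vanish:
  assumes HH1: "M1.spans_modulo_C1 HH1" and HH2: "M2.spans_modulo_C1 HH2"
    and F3: "contra V W3 \<subseteq> fun_span (F3 \<union> C1_contra V W3)"
    and base: "\<And>f h1 r1 h2 r2 a. f \<in> F3 \<Longrightarrow> (h1, r1) \<in> HH1 \<Longrightarrow> (h2, r2) \<in> HH2 \<Longrightarrow> f (I h1 a h2) = 0"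
  shows "I = 0"
proof -
  obtain b where "coeffs_vanish_below b" using coeffs_vanish_below_lowest by blast
  have vanish: "coeffs_vanish_below (b + real n)" for n
  proof (induction n)
    case 0
    then show ?case using \<open>coeffs_vanish_below b\<close> by simp
  next
    case (Suc n)
    have "coeffs_vanish_below (b + real n + 1)"
      using base Suc.IH by (rule coeffs_vanish_below_add_1[OF HH1 HH2 F3])
    then show ?case by (simp add: algebra_simps)
  qed
  have homogeneous: "I w1 a w2 = 0" if "w1 \<in> Wr V W1 r1" "w2 \<in> Wr V W2 r2" for w1 w2 r1 r2 a
  proof (rule M3.contra_separates, intro ballI)
    fix g assume "g \<in> contra V W3"
    moreover have "level r1 r2 a < b + real (nat \<lceil>level r1 r2 a - b\<rceil> + 1)" by linarith
    ultimately show "g (I w1 a w2) = 0" using coeffs_vanish_belowD[OF vanish that] by blast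
  qed
  have "I w1 a w2 = 0" for w1 a w2
  proof -
    obtain S1 c1 where S1: "finite S1" "\<forall>r\<in>S1. c1 r \<in> Wr V W1 r" "w1 = (\<Sum>r\<in>S1. c1 r)"
      using M1.homogeneous_decomposition by blast
    obtain S2 c2 where S2: "finite S2" "\<forall>r\<in>S2. c2 r \<in> Wr V W2 r" "w2 = (\<Sum>r\<in>S2. c2 r)"
      using M2.homogeneous_decomposition by blast
    have "I w1 a w2 = (\<Sum>s\<in>S2. \<Sum>r\<in>S1. I (c1 r) a (c2 s))"
      unfolding S1(3) S2(3) is_linear_sum[OF I_linear_left] is_linear_sum[OF I_linear_right] ..
    also have "\<dots> = 0" using homogeneous S1(2) S2(2) by (intro sum.neutral ballI) blast
    finally show ?thesis .
  qed
  then show ?thesis by (simp add: fun_eq_iff)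
qed

end

lemma (in intertwining_operator) coeff_vanishes_off_support:
  assumes f: "f \<in> contra V W3" and R: "\<forall>r. r \<notin> R \<longrightarrow> (\<forall>w\<in>Wr V W3 r. f w = 0)"
    and h1: "h1 \<in> Wr V W1 r1" and h2: "h2 \<in> Wr V W2 r2"
    and a: "a \<notin> (\<lambda>s. of_real (r1 + r2 - 1 - s)) ` R"
  shows "f (I h1 a h2) = 0"
proof (cases "I h1 a h2 = 0")
  case True
  then show ?thesis by (simp add: contra_zero[OF f])
next
  case False
  have "r1 + r2 - Re a - 1 \<notin> R"
  proof
    assume "r1 + r2 - Re a - 1 \<in> R"
    moreover have "a = of_real (r1 + r2 - 1 - (r1 + r2 - Re a - 1))"
      using I_nonzero_imp_real[OF h1 h2 False] by simp
    ultimately show False using a by blast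
  qed
  then show ?thesis using R I_Wr[OF h1 h2] by blast
qed

context three_drg_modules
begin

lemma finitely_many_coeffs_determine_intertwining:
  assumes "C1_cofinite V W1" "C1_cofinite V W2" "contra_C1_cofinite V W3"
  shows "\<exists>K. finite K \<and> (\<forall>(f, _, _, _)\<in>K. f \<in> contra V W3) \<and>
    (\<forall>J. is_intertwining V W1 W2 W3 J \<longrightarrow> (\<forall>(f, h1, h2, a)\<in>K. f (J h1 a h2) = 0) \<longrightarrow>
      J = 0)"
proof -
  obtain HH1 where HH1: "finite HH1" "M1.spans_modulo_C1 HH1"
    using M1.C1_cofinite_imp_spans_modulo_C1[OF assms(1)] by blast
  obtain HH2 where HH2: "finite HH2" "M2.spans_modulo_C1 HH2"
    using M2.C1_cofinite_imp_spans_modulo_C1[OF assms(2)] by blast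
  obtain F3 where F3: "finite F3" "F3 \<subseteq> contra V W3" "contra V W3 \<subseteq> fun_span (F3 \<union> C1_contra V W3)"
    using assms(3) unfolding contra_C1_cofinite_def by blast
  obtain R where R: "\<And>f. f \<in> F3 \<Longrightarrow> finite (R f) \<and> (\<forall>r. r \<notin> R f \<longrightarrow> (\<forall>w\<in>Wr V W3 r. f w = 0))"
    using F3(2) contra_finite_support by (metis subsetD)
  \<comment> \<open>by the weight formula for \<open>J\<close>, only these modes can pair nontrivially with \<open>f \<in> F\<^sub>3\<close>\<close>
  define K where "K = (\<lambda>((f, (h1, r1), (h2, r2)), s). (f, h1, h2, of_real (r1 + r2 - 1 - s) :: complex))
    ` (SIGMA p:F3 \<times> HH1 \<times> HH2. R (fst p))"
  have "finite K"
    unfolding K_def using F3(1) HH1(1) HH2(1) R by (intro finite_imageI finite_SigmaI) auto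
  moreover have "\<forall>(f, _, _, _)\<in>K. f \<in> contra V W3" using F3(2) by (auto simp: K_def)
  moreover have "J = 0"
    if J: "is_intertwining V W1 W2 W3 J" and K: "\<forall>(f, h1, h2, a)\<in>K. f (J h1 a h2) = 0" for J
  proof -
    interpret J: intertwining_operator V W1 W2 W3 J
      using J by unfold_locales
    show ?thesis
    proof (rule J.eq_0_if_base_coeffs_vanish[OF HH1(2) HH2(2) F3(3)])
      fix f h1 r1 h2 r2 a assume f: "f \<in> F3" and h1: "(h1, r1) \<in> HH1" and h2: "(h2, r2) \<in> HH2"
      show "f (J h1 a h2) = 0"
      proof (cases "a \<in> (\<lambda>s. of_real (r1 + r2 - 1 - s)) ` R f")
        case True
        then have "(f, h1, h2, a) \<in> K" using f h1 h2 by (force simp: K_def)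
        then show ?thesis using K by blast
      next
        case False
        have "h1 \<in> Wr V W1 r1" using h1 HH1(2) by (auto simp: M1.spans_modulo_C1_def)
        moreover have "h2 \<in> Wr V W2 r2" using h2 HH2(2) by (auto simp: M2.spans_modulo_C1_def)
        moreover have "f \<in> contra V W3" using f F3(2) by blast
        ultimately show ?thesis using J.coeff_vanishes_off_support R[OF f] False by blast
      qed
    qed
  qed
  ultimately show ?thesis by blast
qed

definition op_scale :: "complex \<Rightarrow> ('w1 \<Rightarrow> complex \<Rightarrow> 'w2 \<Rightarrow> 'w3) \<Rightarrow> ('w1 \<Rightarrow> complex \<Rightarrow> 'w2 \<Rightarrow> 'w3)"
  where "op_scale c J = (\<lambda>w1 n w2. mscale W3 c (J w1 n w2))"

sublocale Op: vector_space op_scale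
  by unfold_locales
    (simp_all add: op_scale_def fun_eq_iff M3.W.scale_right_distrib M3.W.scale_left_distrib)

definition jacobi_lhs ::
  "('w1 \<Rightarrow> complex \<Rightarrow> 'w2 \<Rightarrow> 'w3) \<Rightarrow> 'v \<Rightarrow> 'w1 \<Rightarrow> 'w2 \<Rightarrow> int \<Rightarrow> int \<Rightarrow> complex \<Rightarrow> nat \<Rightarrow> 'w3" where
  "jacobi_lhs J v w1 w2 p q a M = (\<Sum>i=0..M. mscale W3 (of_int p gchoose i)
      (J (mY W1 v (q + int i) w1) (of_int p + a - of_nat i) w2))"

definition jacobi_rhs ::
  "('w1 \<Rightarrow> complex \<Rightarrow> 'w2 \<Rightarrow> 'w3) \<Rightarrow> 'v \<Rightarrow> 'w1 \<Rightarrow> 'w2 \<Rightarrow> int \<Rightarrow> int \<Rightarrow> complex \<Rightarrow> nat \<Rightarrow> 'w3" where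
  "jacobi_rhs J v w1 w2 p q a M = (\<Sum>i=0..M. mscale W3 ((-1) ^ i * (of_int q gchoose i))
      (mY W3 v (p + q - int i) (J w1 (a + of_nat i) w2)
       - mscale W3 ((-1) powi q) (J w1 (of_int q + a - of_nat i) (mY W2 v (p + int i) w2))))"

lemma is_intertwining_iff:
  "is_intertwining V W1 W2 W3 J \<longleftrightarrow>
     (\<forall>w1 n. is_linear (mscale W2) (mscale W3) (J w1 n))
   \<and> (\<forall>w2 n. is_linear (mscale W1) (mscale W3) (\<lambda>w1. J w1 n w2))
   \<and> (\<forall>w1 w2 n. eventually (\<lambda>m. J w1 (n + of_nat m) w2 = 0) sequentially)
   \<and> (\<forall>w1 n w2. J (mY W1 (omega V) 0 w1) n w2 = mscale W3 (- n) (J w1 (n - 1) w2))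
   \<and> (\<forall>v w1 w2 p q a. eventually
        (\<lambda>M. jacobi_lhs J v w1 w2 p q a M = jacobi_rhs J v w1 w2 p q a M) sequentially)"
  unfolding is_intertwining_def jacobi_lhs_def jacobi_rhs_def eventually_sequentially ..

lemma jacobi_lhs_lin_comb:
  "jacobi_lhs (op_scale c J + J') v w1 w2 p q a M
    = mscale W3 c (jacobi_lhs J v w1 w2 p q a M) + jacobi_lhs J' v w1 w2 p q a M"
  by (simp add: jacobi_lhs_def op_scale_def sum.distrib[symmetric] M3.W.scale_sum_right
      M3.W.scale_right_distrib M3.W.scale_left_commute[of c] mult.commute)

lemma jacobi_rhs_lin_comb:
  "jacobi_rhs (op_scale c J + J') v w1 w2 p q a M
    = mscale W3 c (jacobi_rhs J v w1 w2 p q a M) + jacobi_rhs J' v w1 w2 p q a M"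
  by (simp add: jacobi_rhs_def op_scale_def sum.distrib[symmetric] M3.W.scale_sum_right
      is_linear_add[OF M3.mY_linear] is_linear_scale[OF M3.mY_linear]
      M3.W.scale_right_distrib M3.W.scale_right_diff_distrib M3.W.scale_left_commute[of c]
      algebra_simps)

lemma is_intertwining_eventually_vanishing:
  "is_intertwining V W1 W2 W3 J \<Longrightarrow> eventually (\<lambda>m. J w1 (n + of_nat m) w2 = 0) sequentially"
  by (simp add: is_intertwining_iff)

lemma is_intertwining_eventually_jacobi:
  "is_intertwining V W1 W2 W3 J \<Longrightarrow>
    eventually (\<lambda>M. jacobi_lhs J v w1 w2 p q a M = jacobi_rhs J v w1 w2 p q a M) sequentially"
  by (simp add: is_intertwining_iff)

lemma is_intertwining_lin_comb:
  assumes J: "is_intertwining V W1 W2 W3 J" and J': "is_intertwining V W1 W2 W3 J'"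
  shows "is_intertwining V W1 W2 W3 (op_scale c J + J')"
proof -
  let ?K = "op_scale c J + J'"
  interpret J: intertwining_operator V W1 W2 W3 J using J by unfold_locales
  interpret J': intertwining_operator V W1 W2 W3 J' using J' by unfold_locales
  show ?thesis
    unfolding is_intertwining_iff
  proof (intro conjI allI)
    fix w1 n
    show "is_linear (mscale W2) (mscale W3) (?K w1 n)"
      unfolding is_linear_def op_scale_def plus_fun_apply
      by (simp add: is_linear_add[OF J.I_linear_right] is_linear_add[OF J'.I_linear_right]
          is_linear_scale[OF J.I_linear_right] is_linear_scale[OF J'.I_linear_right]
          M3.W.scale_right_distrib M3.W.scale_left_commute[of c])
    show "is_linear (mscale W1) (mscale W3) (\<lambda>w1. ?K w1 n w2)" for w2
      unfolding is_linear_def op_scale_def plus_fun_apply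
      by (simp add: is_linear_add[OF J.I_linear_left] is_linear_add[OF J'.I_linear_left]
          is_linear_scale[OF J.I_linear_left] is_linear_scale[OF J'.I_linear_left]
          M3.W.scale_right_distrib M3.W.scale_left_commute[of c])
    show "?K (mY W1 (omega V) 0 w1) n w2 = mscale W3 (- n) (?K w1 (n - 1) w2)" for w2
      unfolding op_scale_def plus_fun_apply J.I_L_minus_1 J'.I_L_minus_1
      by (simp add: M3.W.scale_right_distrib M3.W.scale_left_commute[of c])
  next
    fix w1 w2 n
    have "eventually (\<lambda>m. J w1 (n + of_nat m) w2 = 0 \<and> J' w1 (n + of_nat m) w2 = 0) sequentially"
      using is_intertwining_eventually_vanishing[OF J] is_intertwining_eventually_vanishing[OF J']
      by (rule eventually_conj)
    then show "eventually (\<lambda>m. ?K w1 (n + of_nat m) w2 = 0) sequentially"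
      by (rule eventually_mono) (simp add: op_scale_def)
  next
    fix v w1 w2 p q a
    have "eventually (\<lambda>M. jacobi_lhs J v w1 w2 p q a M = jacobi_rhs J v w1 w2 p q a M
        \<and> jacobi_lhs J' v w1 w2 p q a M = jacobi_rhs J' v w1 w2 p q a M) sequentially"
      using is_intertwining_eventually_jacobi[OF J] is_intertwining_eventually_jacobi[OF J']
      by (rule eventually_conj)
    then show "eventually (\<lambda>M. jacobi_lhs ?K v w1 w2 p q a M = jacobi_rhs ?K v w1 w2 p q a M) sequentially"
      by (rule eventually_mono) (simp add: jacobi_lhs_lin_comb jacobi_rhs_lin_comb)
  qed
qed

lemma intertwining_subspace: "Op.subspace {J. is_intertwining V W1 W2 W3 J}"
proof -
  have "is_intertwining V W1 W2 W3 0"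
    unfolding is_intertwining_def is_linear_def by (simp add: is_linear_zero[OF M3.mY_linear])
  then show ?thesis
    unfolding Op.subspace_def
    using is_intertwining_lin_comb[where c = 1] is_intertwining_lin_comb[where J' = 0]
    by (simp add: op_scale_def)
qed


lemma intertwining_space_finitely_spanned:
  assumes "C1_cofinite V W1" "C1_cofinite V W2" "contra_C1_cofinite V W3"
  shows "\<exists>B. finite B \<and> B \<subseteq> {J. is_intertwining V W1 W2 W3 J}
    \<and> {J. is_intertwining V W1 W2 W3 J} \<subseteq> Op.span B"
proof -
  obtain K where K: "finite K" "\<forall>(f, _, _, _)\<in>K. f \<in> contra V W3"
    "\<And>J. is_intertwining V W1 W2 W3 J \<Longrightarrow> \<forall>(f, h1, h2, a)\<in>K. f (J h1 a h2) = 0 \<Longrightarrow> J = 0"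
    using finitely_many_coeffs_determine_intertwining[OF assms] by blast
  define coeff :: "('w3 \<Rightarrow> complex) \<times> 'w1 \<times> 'w2 \<times> complex \<Rightarrow> ('w1 \<Rightarrow> complex \<Rightarrow> 'w2 \<Rightarrow> 'w3) \<Rightarrow> complex"
    where "coeff k J = (case k of (f, h1, h2, a) \<Rightarrow> f (J h1 a h2))" for k J
  show ?thesis
  proof (rule Op.subspace_finitely_spanned_if_finitely_many_functionals_separate
      [OF K(1) intertwining_subspace, of coeff])
    show "coeff k (J + J') = coeff k J + coeff k J'" "coeff k (op_scale c J) = c * coeff k J"
      if "k \<in> K" for k J J' c
      using K(2) that by (auto simp: coeff_def op_scale_def contra_add contra_scale)
    show "J = 0" if "J \<in> {J. is_intertwining V W1 W2 W3 J}" "\<And>k. k \<in> K \<Longrightarrow> coeff k J = 0" for J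
      using that by (intro K(3)) (auto simp: coeff_def)
  qed
qed

end

lemma sum_fun_apply: "(\<Sum>k\<in>A. F k) x = (\<Sum>k\<in>A. F k x)"
  by (induction A rule: infinite_finite_induct) auto

theorem theorem3p1:
  fixes V :: "('v::ab_group_add) voa"
    and W1 :: "('v, 'w1::ab_group_add) vmod"
    and W2 :: "('v, 'w2::ab_group_add) vmod"
    and W3 :: "('v, 'w3::ab_group_add) vmod"
  assumes "is_voa V"
    and "is_drg_mod V W1" and "is_drg_mod V W2" and "is_drg_mod V W3"
    and "C1_cofinite V W1" and "C1_cofinite V W2"
    and "contra_C1_cofinite V W3"
  shows "intertwining_space_fin_dim V W1 W2 W3"
proof -
  interpret three_drg_modules V W1 W2 W3
    by (intro three_drg_modules.intro drg_module.intro vertex_operator_algebra.intro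
        drg_module_axioms.intro assms)
  obtain B where B: "finite B" "B \<subseteq> {J. is_intertwining V W1 W2 W3 J}"
    "{J. is_intertwining V W1 W2 W3 J} \<subseteq> Op.span B"
    using intertwining_space_finitely_spanned[OF assms(5-7)] by blast
  show ?thesis
    unfolding intertwining_space_fin_dim_def
  proof (intro exI[of _ B] conjI allI impI B(1,2))
    fix I assume "is_intertwining V W1 W2 W3 I"
    then obtain c where "I = (\<Sum>J\<in>B. op_scale (c J) J)"
      using B(3) Op.span_finite[OF B(1)] by blast
    then show "\<exists>c. I = (\<lambda>w1 n w2. \<Sum>J\<in>B. mscale W3 (c J) (J w1 n w2))"
      by (auto simp: fun_eq_iff sum_fun_apply op_scale_def)
  qed
qed

end
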